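(* Let $p$ be a prime, $\Phi:\mathbb{N}\to\mathbb{N}$ strictly increasing, and $f\in\mathcal{F}(\Phi)$. Let $n_0,u\in\mathbb{N}$ with $u<p^{1+\Phi(n_0)}$, and let $\Lambda:=\{u'\in\mathbb{Z}_p: u'\equiv u\pmod{p^{1+\Phi(n_0)}}\}$. Assume $f$ is uniformly approximable on $\Lambda$ with respect to $\Phi$, with constants $h(\Lambda)$, $l(\Lambda)$, and assume that $n_0+1\ge l(\Lambda)$, that $f(u)\equiv 0\pmod{p^{h(\Lambda)+n_0+1}}$, and that $|(\delta_nf)(u')|_p=1$ for all $n\ge n_0$ and all $u'\in\Lambda$. Then there exists a unique $\xi\in\mathbb{Z}_p$ such that $f(\xi)=0$, $\xi\equiv u\pmod{p^{1+\Phi(n_0)}}$, and $\rho(\xi;n+1)\in\{0,1,\dots,p-1\}$ for every $n\ge n_0$.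
   Context: $\mathbb{N}=\{0,1,2,\dots\}$. $|\cdot|_p$ is the $p$-adic absolute value with $|p|_p=p^{-1}$. Each $x\in\mathbb{Z}_p$ is written $x=\sum_{i\ge0}x_ip^i$ with digits $x_i\in\{0,\dots,p-1\}$. Set $\Phi(-1):=-1$. $\mathcal{F}(\Phi)$ is the class of continuous $f:\mathbb{Z}_p\to\mathbb{Z}_p$ such that for every positive integer $n$ and all $x,y\in\mathbb{Z}_p$: if $|x-y|_p\le p^{-1-\Phi(n-1)}$ then $|f(x)-f(y)|_p\le p^{-n}$. For $x\in\mathbb{Z}_p$ and $j\in\mathbb{N}$, $\rho(x;j):=p^{-1-\Phi(j-1)}\sum_{i=1+\Phi(j-1)}^{\Phi(j)}x_ip^i$. A function $f:\mathbb{Z}_p\to\mathbb{Z}_p$ is approximable at $u\in\mathbb{Z}_p$ with respect to $\Phi$ if there exist nonnegative integers $h=h(u)$, $l=l(u)$ and $p$-adic numbers $(\delta_nf)(u)$ ($n\ge l$) such that for every integer $n\ge l$ and every $u'\in\mathbb{Z}_p$, $f(u+p^{1+\Phi(n-1)}u')\equiv f(u)+p^{h+n}u'\,(\delta_nf)(u)\pmod{p^{h+n+1}}$ (i.e. the difference of the two sides has $p$-adic valuation at least $h+n+1$). $f$ is uniformly approximable on $\Lambda\subset\mathbb{Z}_p$ with respect to $\Phi$ if it is approximable at every $u\in\Lambda$ with respect to $\Phi$ and $h(u)$, $l(u)$ can be chosen constant on $\Lambda$; these constants are denoted $h(\Lambda)$, $l(\Lambda)$. *)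

theory Defs
  imports "HOL-Computational_Algebra.Primes"
begin

text \<open>p-adic integers represented by their compatible sequence of truncations:
  x k is the residue of x modulo p^k, in [0, p^k).\<close>

definition Zp :: "nat \<Rightarrow> (nat \<Rightarrow> int) set" where
  "Zp p = {x. (\<forall>k. 0 \<le> x k \<and> x k < int p ^ k) \<and> (\<forall>k. x (Suc k) mod int p ^ k = x k)}"

definition zp_of_int :: "nat \<Rightarrow> int \<Rightarrow> (nat \<Rightarrow> int)" where
  "zp_of_int p a = (\<lambda>k. a mod int p ^ k)"

definition zp_add :: "nat \<Rightarrow> (nat \<Rightarrow> int) \<Rightarrow> (nat \<Rightarrow> int) \<Rightarrow> (nat \<Rightarrow> int)" where
  "zp_add p x y = (\<lambda>k. (x k + y k) mod int p ^ k)"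

definition zp_mult :: "nat \<Rightarrow> (nat \<Rightarrow> int) \<Rightarrow> (nat \<Rightarrow> int) \<Rightarrow> (nat \<Rightarrow> int)" where
  "zp_mult p x y = (\<lambda>k. (x k * y k) mod int p ^ k)"

text \<open>x \<equiv> y (mod p^m), i.e. |x - y|_p \<le> p^(-m).\<close>
definition zp_cong :: "nat \<Rightarrow> nat \<Rightarrow> (nat \<Rightarrow> int) \<Rightarrow> (nat \<Rightarrow> int) \<Rightarrow> bool" where
  "zp_cong p m x y \<longleftrightarrow> x m = y m"

definition zp_continuous :: "nat \<Rightarrow> ((nat \<Rightarrow> int) \<Rightarrow> (nat \<Rightarrow> int)) \<Rightarrow> bool" where
  "zp_continuous p f \<longleftrightarrow> (\<forall>x\<in>Zp p. \<forall>m. \<exists>N. \<forall>y\<in>Zp p. zp_cong p N x y \<longrightarrow> zp_cong p m (f x) (f y))"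

text \<open>the exponent 1 + \<Phi>(n-1), with the convention \<Phi>(-1) = -1\<close>
definition phiexp :: "(nat \<Rightarrow> nat) \<Rightarrow> nat \<Rightarrow> nat" where
  "phiexp \<Phi> n = (if n = 0 then 0 else Suc (\<Phi> (n - 1)))"

definition classF :: "nat \<Rightarrow> (nat \<Rightarrow> nat) \<Rightarrow> ((nat \<Rightarrow> int) \<Rightarrow> (nat \<Rightarrow> int)) set" where
  "classF p \<Phi> = {f. (\<forall>x\<in>Zp p. f x \<in> Zp p) \<and> zp_continuous p f \<and>
     (\<forall>n>0. \<forall>x\<in>Zp p. \<forall>y\<in>Zp p. zp_cong p (phiexp \<Phi> n) x y \<longrightarrow> zp_cong p n (f x) (f y))}"

definition digit :: "nat \<Rightarrow> (nat \<Rightarrow> int) \<Rightarrow> nat \<Rightarrow> nat" where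
  "digit p x i = nat ((x (Suc i) - x i) div int p ^ i)"

definition rho :: "nat \<Rightarrow> (nat \<Rightarrow> nat) \<Rightarrow> (nat \<Rightarrow> int) \<Rightarrow> nat \<Rightarrow> nat" where
  "rho p \<Phi> x j = (\<Sum>i\<in>{phiexp \<Phi> j..\<Phi> j}. digit p x i * p ^ (i - phiexp \<Phi> j))"

text \<open>f is uniformly approximable on \<Lambda> w.r.t. \<Phi> with constants h, l and
  approximants \<delta> n u = (\<delta>_n f)(u).\<close>
definition unif_approx ::
  "nat \<Rightarrow> (nat \<Rightarrow> nat) \<Rightarrow> ((nat \<Rightarrow> int) \<Rightarrow> (nat \<Rightarrow> int)) \<Rightarrow> (nat \<Rightarrow> int) set
     \<Rightarrow> nat \<Rightarrow> nat \<Rightarrow> (nat \<Rightarrow> (nat \<Rightarrow> int) \<Rightarrow> (nat \<Rightarrow> int)) \<Rightarrow> bool" where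
  "unif_approx p \<Phi> f \<Lambda> h l \<delta> \<longleftrightarrow>
     (\<forall>u\<in>\<Lambda>. \<forall>n\<ge>l. \<delta> n u \<in> Zp p \<and>
        (\<forall>u'\<in>Zp p.
           zp_cong p (h + n + 1)
             (f (zp_add p u (zp_mult p (zp_of_int p (int p ^ phiexp \<Phi> n)) u')))
             (zp_add p (f u) (zp_mult p (zp_mult p (zp_of_int p (int p ^ (h + n))) u') (\<delta> n u)))))"

end

theory Submission
  imports Defs
begin

text \<open>Hensel-type lifting along the levels 1 + \<Phi>(n). Uniform approximability says that moving an
  approximate root a by p^(1+\<Phi> n) z changes f(a) modulo p^(h+n+2) only through the lowest digit
  z_0 of z, by z_0 (\<delta>_(n+1) f)(a) p^(h+n+1). As (\<delta>_(n+1) f)(a) is a unit, exactly one digit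
  t \<in> {0..p-1} lifts a root of f modulo p^(h+n+1) to one modulo p^(h+n+2). Iterating from u
  yields a coherent sequence of truncations and hence the root \<xi>; conversely the condition
  \<rho>(\<xi>; n+1) < p forces every digit of a root between two consecutive levels to be zero except
  the lowest one, which must then be the uniquely determined t.\<close>

lemma Zp_truncation_bounds: "x \<in> Zp p \<Longrightarrow> 0 \<le> x k \<and> x k < int p ^ k"
  by (simp add: Zp_def)

lemma Zp_truncation_mod:
  assumes x: "x \<in> Zp p" and "k \<le> m"
  shows "x m mod int p ^ k = x k"
  using \<open>k \<le> m\<close>
proof (induction m rule: dec_induct)
  case base
  show ?case using Zp_truncation_bounds[OF x, of k] by simp
next
  case (step m)
  have "x (Suc m) mod int p ^ k = x (Suc m) mod int p ^ m mod int p ^ k"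
    using step.hyps by (simp add: le_imp_power_dvd mod_mod_cancel)
  also have "\<dots> = x k" using x step.IH by (simp add: Zp_def)
  finally show ?case .
qed

lemma zp_of_int_in_Zp: "p > 0 \<Longrightarrow> zp_of_int p a \<in> Zp p"
  unfolding Zp_def zp_of_int_def by (auto simp: le_imp_power_dvd mod_mod_cancel)

lemma zp_add_mult_of_int:
  "zp_add p (zp_of_int p a) (zp_mult p (zp_of_int p b) (zp_of_int p c)) = zp_of_int p (a + b * c)"
  unfolding zp_add_def zp_mult_def zp_of_int_def by (simp add: mod_add_eq mod_mult_eq)

lemma digit_times_power:
  assumes x: "x \<in> Zp p" and "p > 0"
  shows "int (digit p x i) * int p ^ i = x (Suc i) - x i"
proof -
  have "x (Suc i) - x i = x (Suc i) div int p ^ i * int p ^ i"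
    using x by (simp add: Zp_def flip: minus_mod_eq_div_mult)
  moreover have "0 \<le> x (Suc i) div int p ^ i"
    using Zp_truncation_bounds[OF x] \<open>p > 0\<close> by (simp add: pos_imp_zdiv_nonneg_iff)
  ultimately show ?thesis using \<open>p > 0\<close> by (simp add: digit_def)
qed

lemma Zp_digit_expansion:
  assumes x: "x \<in> Zp p" and "p > 0" and "A \<le> Suc B"
  shows "x (Suc B) = x A + int p ^ A * int (\<Sum>i\<in>{A..B}. digit p x i * p ^ (i - A))"
proof -
  have "int p ^ A * int (\<Sum>i\<in>{A..B}. digit p x i * p ^ (i - A))
      = (\<Sum>i\<in>{A..B}. int (digit p x i) * int p ^ i)"
    unfolding of_nat_sum sum_distrib_left
  proof (rule sum.cong)
    fix i assume "i \<in> {A..B}"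
    then have "int p ^ i = int p ^ A * int p ^ (i - A)"
      by (simp flip: power_add)
    then show "int p ^ A * int (digit p x i * p ^ (i - A)) = int (digit p x i) * int p ^ i"
      by simp
  qed simp
  also have "\<dots> = (\<Sum>i\<in>{A..B}. x (Suc i) - x i)"
    using digit_times_power[OF x \<open>p > 0\<close>] by simp
  also have "\<dots> = x (Suc B) - x A"
    using sum_Suc_diff[OF \<open>A \<le> Suc B\<close>] .
  finally show ?thesis by simp
qed

lemma rho_expansion:
  assumes "x \<in> Zp p" and "p > 0" and "\<Phi> n \<le> \<Phi> (Suc n)"
  shows "x (Suc (\<Phi> (Suc n))) = x (Suc (\<Phi> n)) + int p ^ Suc (\<Phi> n) * int (rho p \<Phi> x (Suc n))"
  using Zp_digit_expansion[OF assms(1,2), of "Suc (\<Phi> n)" "\<Phi> (Suc n)"] assms(3)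
  by (simp add: rho_def phiexp_def)

lemma rho_less_imp_eq_digit:
  assumes "\<Phi> n < \<Phi> (Suc n)" and "rho p \<Phi> x (Suc n) < p"
  shows "rho p \<Phi> x (Suc n) = digit p x (Suc (\<Phi> n))"
proof -
  define A where "A = Suc (\<Phi> n)"
  define S where "S = (\<Sum>i\<in>{Suc A..\<Phi> (Suc n)}. digit p x i * p ^ (i - A))"
  have rho: "rho p \<Phi> x (Suc n) = digit p x A + S"
    using assms(1) by (simp add: rho_def phiexp_def S_def A_def sum.atLeast_Suc_atMost)
  have "p dvd S"
    unfolding S_def by (intro dvd_sum dvd_mult dvd_power) auto
  moreover have "S < p" using rho assms(2) by simp
  ultimately have "S = 0" by (auto dest: dvd_imp_le)
  then show ?thesis using rho by (simp add: A_def)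
qed

lemma Zp_split_at:
  assumes x: "x \<in> Zp p" and "p > 0"
  obtains z where "z \<in> Zp p" "zp_add p (zp_of_int p (x A)) (zp_mult p (zp_of_int p (int p ^ A)) z) = x"
    "z 1 = int (digit p x A)"
proof -
  define P where "P = int p"
  have P: "P > 0" using \<open>p > 0\<close> by (simp add: P_def)
  define z where "z = (\<lambda>k. x (k + A) div P ^ A)"
  have x_mod: "x (k + A) mod P ^ A = x A" for k
    using Zp_truncation_mod[OF x, of A "k + A"] by (simp add: P_def)
  have x_split: "x (k + A) = P ^ A * z k + x A" for k
    using x_mod[of k] unfolding z_def by (metis div_mult_mod_eq mult.commute)
  have "z \<in> Zp p"
    unfolding Zp_def
  proof (intro CollectI conjI allI)
    fix k
    have r: "0 \<le> x (k + A)" "x (k + A) < P ^ k * P ^ A"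
      using Zp_truncation_bounds[OF x, of "k + A"] by (auto simp: P_def power_add)
    show "0 \<le> z k" unfolding z_def using r P by (simp add: pos_imp_zdiv_nonneg_iff)
    have "x (k + A) div P ^ A * P ^ A \<le> x (k + A)"
      using P by (simp flip: minus_mod_eq_div_mult)
    then show "z k < int p ^ k"
      using r(2) P unfolding z_def P_def[symmetric]
      by (meson le_less_trans mult_right_less_imp_less zero_le_power less_imp_le)
  next
    fix k
    have "x (Suc k + A) mod (P ^ A * P ^ k) = P ^ A * (z (Suc k) mod P ^ k) + x A"
      unfolding z_def using P x_mod[of "Suc k"] by (simp add: zmod_zmult2_eq)
    moreover have "x (Suc k + A) mod (P ^ A * P ^ k) = x (k + A)"
      using Zp_truncation_mod[OF x, of "k + A" "Suc k + A"]
      by (simp add: P_def power_add mult.commute add.commute)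
    ultimately have "P ^ A * z k = P ^ A * (z (Suc k) mod P ^ k)"
      using x_split[of k] by linarith
    then show "z (Suc k) mod int p ^ k = z k" using P by (auto simp: P_def)
  qed
  moreover have "zp_add p (zp_of_int p (x A)) (zp_mult p (zp_of_int p (int p ^ A)) z) = x"
  proof
    fix k
    have "zp_add p (zp_of_int p (x A)) (zp_mult p (zp_of_int p (int p ^ A)) z) k
        = (x A + P ^ A * z k) mod P ^ k"
      unfolding zp_add_def zp_mult_def zp_of_int_def P_def
      by (simp add: mod_add_eq mod_mult_eq) (metis mod_add_right_eq mod_mult_left_eq)
    also have "\<dots> = x (k + A) mod P ^ k" using x_split[of k] by (simp add: add.commute)
    also have "\<dots> = x k" using Zp_truncation_mod[OF x, of k "k + A"] by (simp add: P_def)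
    finally show "zp_add p (zp_of_int p (x A)) (zp_mult p (zp_of_int p (int p ^ A)) z) k = x k" .
  qed
  moreover have "z 1 = int (digit p x A)"
  proof -
    have "z 1 * P ^ A = int (digit p x A) * P ^ A"
      using x_split[of 1] digit_times_power[OF x \<open>p > 0\<close>, of A] by (auto simp: P_def mult.commute)
    then show ?thesis using P by auto
  qed
  ultimately show ?thesis using that by blast
qed

lemma Zp_limit:
  assumes "p > 0" and E: "mono E" "\<And>k. k \<le> E k"
    and V_bounds: "\<And>k. 0 \<le> V k \<and> V k < int p ^ E k"
    and V_coherent: "\<And>k. V (Suc k) mod int p ^ E k = V k"
  obtains x where "x \<in> Zp p" "\<And>k. x (E k) = V k"
proof -
  have V_mod: "V k' mod int p ^ E k = V k" if "k \<le> k'" for k k'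
    using that
  proof (induction k' rule: dec_induct)
    case base
    show ?case using V_bounds[of k] by simp
  next
    case (step k')
    have "int p ^ E k dvd int p ^ E k'"
      using \<open>k \<le> k'\<close> E(1) by (simp add: le_imp_power_dvd monoD)
    then have "V (Suc k') mod int p ^ E k = V (Suc k') mod int p ^ E k' mod int p ^ E k"
      by (simp add: mod_mod_cancel)
    then show ?case using V_coherent step.IH by simp
  qed
  define x where "x = (\<lambda>j. V j mod int p ^ j)"
  have x_V: "x j = V k mod int p ^ j" if "j \<le> E k" for j k
  proof (cases "j \<le> k")
    case True
    have "int p ^ j dvd int p ^ E j" using E(2)[of j] by (simp add: le_imp_power_dvd)
    then have "V k mod int p ^ j = V k mod int p ^ E j mod int p ^ j" by (simp add: mod_mod_cancel)
    then show ?thesis using V_mod[OF True] by (simp add: x_def)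
  next
    case False
    have "int p ^ j dvd int p ^ E k" using that by (simp add: le_imp_power_dvd)
    then have "V j mod int p ^ j = V j mod int p ^ E k mod int p ^ j" by (simp add: mod_mod_cancel)
    then show ?thesis using V_mod[of k j] False by (simp add: x_def)
  qed
  have "x \<in> Zp p"
    unfolding Zp_def
  proof (intro CollectI conjI allI)
    fix j
    show "0 \<le> x j" "x j < int p ^ j" using \<open>p > 0\<close> by (auto simp: x_def)
    have "x j = V (Suc j) mod int p ^ Suc j mod int p ^ j"
      using x_V[of j "Suc j"] E(2)[of "Suc j"] by (simp add: mod_mod_cancel le_imp_power_dvd)
    then show "x (Suc j) mod int p ^ j = x j" by (simp add: x_def)
  qed
  moreover have "x (E k) = V k" for k
    using x_V[of "E k" k] V_bounds[of k] by simp
  ultimately show ?thesis using that by blast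
qed

lemma Zp_eqI_on_levels:
  assumes "x \<in> Zp p" "y \<in> Zp p" "\<And>k. k \<le> E k" "\<And>k. x (E k) = y (E k)"
  shows "x = y"
proof
  fix j
  show "x j = y j"
    using Zp_truncation_mod[OF assms(1) assms(3)] Zp_truncation_mod[OF assms(2) assms(3)] assms(4)
    by metis
qed

lemma unif_approx_truncation:
  assumes "unif_approx p \<Phi> f \<Lambda> h l \<delta>" and "v \<in> \<Lambda>" and "l \<le> n" and z: "z \<in> Zp p"
  shows "f (zp_add p v (zp_mult p (zp_of_int p (int p ^ phiexp \<Phi> n)) z)) (h + n + 1)
     = (f v (h + n + 1) + int p ^ (h + n) * ((z 1 * \<delta> n v 1) mod int p)) mod int p ^ (h + n + 1)"
proof -
  define P where "P = int p"
  define M where "M = h + n + 1"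
  have \<delta>: "\<delta> n v \<in> Zp p"
    and approx: "zp_cong p M
       (f (zp_add p v (zp_mult p (zp_of_int p (int p ^ phiexp \<Phi> n)) z)))
       (zp_add p (f v) (zp_mult p (zp_mult p (zp_of_int p (int p ^ (h + n))) z) (\<delta> n v)))"
    using assms unfolding unif_approx_def M_def by auto
  have "f (zp_add p v (zp_mult p (zp_of_int p (int p ^ phiexp \<Phi> n)) z)) M
      = (f v M + P ^ (h + n) * (z M * \<delta> n v M)) mod P ^ M"
    using approx unfolding zp_cong_def zp_add_def zp_mult_def zp_of_int_def P_def
    by (simp add: mod_simps mult.assoc)
  also have "\<dots> = (f v M + P ^ (h + n) * ((z M * \<delta> n v M) mod P)) mod P ^ M"
  proof -
    have "P ^ M = P ^ (h + n) * P" by (simp add: M_def)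
    then have "(P ^ (h + n) * (z M * \<delta> n v M)) mod P ^ M = P ^ (h + n) * ((z M * \<delta> n v M) mod P)"
      by (simp only: mod_mult_mult1)
    then show ?thesis
      using mod_add_right_eq[of "f v M" "P ^ (h + n) * (z M * \<delta> n v M)" "P ^ M"] by simp
  qed
  also have "(z M * \<delta> n v M) mod P = (z 1 * \<delta> n v 1) mod P"
  proof -
    have "z M mod P = z 1" "\<delta> n v M mod P = \<delta> n v 1"
      using Zp_truncation_mod[OF z, of 1 M] Zp_truncation_mod[OF \<delta>, of 1 M] by (simp_all add: M_def P_def)
    then show ?thesis by (metis mod_mult_eq)
  qed
  finally show ?thesis by (simp add: M_def P_def)
qed

lemma dvd_top_digit_iff:
  fixes F Q P x :: int
  assumes "Q \<noteq> 0" and "Q dvd F"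
  shows "(F + Q * (x mod P)) mod (Q * P) = 0 \<longleftrightarrow> P dvd F div Q + x"
proof -
  obtain c where F: "F = Q * c" using assms(2) by blast
  have "(F + Q * (x mod P)) mod (Q * P) = Q * ((c + x mod P) mod P)"
    unfolding F distrib_left[symmetric] by (rule mod_mult_mult1)
  also have "(c + x mod P) mod P = (c + x) mod P"
    by (simp add: mod_add_right_eq)
  finally show ?thesis
    using assms(1) by (simp add: F dvd_eq_mod_eq_0)
qed

lemma ex1_digit_solution:
  fixes P c d :: int
  assumes "prime P" and "\<not> P dvd d"
  shows "\<exists>!t. 0 \<le> t \<and> t < P \<and> P dvd c + t * d"
proof (rule ex_ex1I)
  have "coprime P d" using assms by (simp add: prime_imp_coprime)
  then obtain x y where "x * P + y * d = 1" using bezout_int[of P d] by auto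
  then have "c * (x * P + y * d) = c" by simp
  then have "c + (- c * y) * d = (c * x) * P" by (simp add: algebra_simps)
  then have "P dvd c + (- c * y) * d" by simp
  moreover have "(c + ((- c * y) mod P) * d) mod P = (c + (- c * y) * d) mod P"
    by (metis mod_add_right_eq mod_mult_left_eq)
  ultimately have "P dvd c + ((- c * y) mod P) * d"
    by (simp add: dvd_eq_mod_eq_0)
  moreover have "0 \<le> (- c * y) mod P" "(- c * y) mod P < P"
    using prime_gt_0_int[OF assms(1)] by auto
  ultimately show "\<exists>t. 0 \<le> t \<and> t < P \<and> P dvd c + t * d"
    by blast
next
  fix t s
  assume t: "0 \<le> t \<and> t < P \<and> P dvd c + t * d" and s: "0 \<le> s \<and> s < P \<and> P dvd c + s * d"
  then have "P dvd (t - s) * d" using dvd_diff[of P "c + t * d" "c + s * d"]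
    by (simp add: algebra_simps)
  then have "P dvd t - s" using assms by (simp add: prime_dvd_mult_iff)
  then show "t = s" using t s by (metis mod_eq_dvd_iff mod_pos_pos_trivial)
qed

locale hensel_lifting =
  fixes p :: nat and \<Phi> :: "nat \<Rightarrow> nat" and f :: "(nat \<Rightarrow> int) \<Rightarrow> (nat \<Rightarrow> int)"
    and n0 u h l :: nat and \<delta> :: "nat \<Rightarrow> (nat \<Rightarrow> int) \<Rightarrow> (nat \<Rightarrow> int)"
    and \<Lambda> :: "(nat \<Rightarrow> int) set"
  assumes prime: "prime p"
    and \<Phi>_strict_mono: "strict_mono \<Phi>"
    and f_classF: "f \<in> classF p \<Phi>"
    and u_bound: "u < p ^ Suc (\<Phi> n0)"
    and \<Lambda>_eq: "\<Lambda> = {v \<in> Zp p. zp_cong p (Suc (\<Phi> n0)) v (zp_of_int p (int u))}"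
    and unif_approx: "unif_approx p \<Phi> f \<Lambda> h l \<delta>"
    and l_le: "n0 + 1 \<ge> l"
    and f_u: "zp_cong p (h + n0 + 1) (f (zp_of_int p (int u))) (zp_of_int p 0)"
    and \<delta>_unit: "\<forall>n\<ge>n0. \<forall>v\<in>\<Lambda>. \<delta> n v 1 \<noteq> 0"
begin

lemma p_pos: "p > 0"
  using prime prime_gt_0_nat by blast

lemma f_in_Zp: "x \<in> Zp p \<Longrightarrow> f x \<in> Zp p"
  using f_classF by (simp add: classF_def)

lemma int_u_bound: "int u < int p ^ Suc (\<Phi> n0)"
  using u_bound by (metis of_nat_less_iff of_nat_power)

lemma int_u_mod: "int u mod int p ^ Suc (\<Phi> n0) = int u"
  using int_u_bound by simp

lemma f_cong:
  "0 < n \<Longrightarrow> x \<in> Zp p \<Longrightarrow> y \<in> Zp p \<Longrightarrow> zp_cong p (phiexp \<Phi> n) x y \<Longrightarrow> zp_cong p n (f x) (f y)"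
  using f_classF by (simp add: classF_def)

lemma zp_of_int_in_\<Lambda>:
  "a mod int p ^ Suc (\<Phi> n0) = int u \<Longrightarrow> zp_of_int p a \<in> \<Lambda>"
  using \<Lambda>_eq int_u_mod zp_of_int_in_Zp[OF p_pos] by (simp add: zp_cong_def zp_of_int_def)

lemma \<delta>_not_dvd:
  assumes "n0 \<le> n" and "v \<in> \<Lambda>"
  shows "\<not> int p dvd \<delta> (Suc n) v 1"
proof -
  have "\<delta> (Suc n) v \<in> Zp p"
    using unif_approx assms l_le unfolding unif_approx_def by auto
  then have "0 \<le> \<delta> (Suc n) v 1" "\<delta> (Suc n) v 1 < int p"
    using Zp_truncation_bounds[of "\<delta> (Suc n) v" p 1] by auto
  moreover have "\<delta> (Suc n) v 1 \<noteq> 0" using \<delta>_unit assms by simp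
  ultimately show ?thesis by (auto dest: zdvd_imp_le)
qed

definition lift_digit :: "nat \<Rightarrow> int \<Rightarrow> int" where
  "lift_digit n a = (THE t. 0 \<le> t \<and> t < int p \<and>
     int p dvd f (zp_of_int p a) (h + n + 2) div int p ^ (h + n + 1) + t * \<delta> (Suc n) (zp_of_int p a) 1)"

lemma ex1_lift_digit:
  assumes "n0 \<le> n" and "a mod int p ^ Suc (\<Phi> n0) = int u"
  shows "\<exists>!t. 0 \<le> t \<and> t < int p \<and>
     int p dvd f (zp_of_int p a) (h + n + 2) div int p ^ (h + n + 1) + t * \<delta> (Suc n) (zp_of_int p a) 1"
  using ex1_digit_solution prime \<delta>_not_dvd[OF assms(1) zp_of_int_in_\<Lambda>[OF assms(2)]] by simp

lemma lift_digit_bounds: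
  assumes "n0 \<le> n" and "a mod int p ^ Suc (\<Phi> n0) = int u"
  shows "0 \<le> lift_digit n a \<and> lift_digit n a < int p"
  using theI'[OF ex1_lift_digit[OF assms]] by (simp add: lift_digit_def)

lemma lift_vanishes_iff:
  assumes "n0 \<le> n" and a: "a mod int p ^ Suc (\<Phi> n0) = int u"
    and root: "f (zp_of_int p a) (h + n + 1) = 0" and z: "z \<in> Zp p"
  shows "f (zp_add p (zp_of_int p a) (zp_mult p (zp_of_int p (int p ^ Suc (\<Phi> n))) z)) (h + n + 2) = 0
    \<longleftrightarrow> z 1 = lift_digit n a"
proof -
  define v where "v = zp_of_int p a"
  define Q where "Q = int p ^ (h + n + 1)"
  define d where "d = \<delta> (Suc n) v 1"
  have "f v (h + n + 2) mod Q = 0"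
    using Zp_truncation_mod[OF f_in_Zp[OF zp_of_int_in_Zp[OF p_pos]], of "h + n + 1" "h + n + 2"] root
    by (simp add: v_def Q_def)
  then have Q_dvd: "Q dvd f v (h + n + 2)" by presburger
  have "l \<le> Suc n" using l_le \<open>n0 \<le> n\<close> by simp
  have "f (zp_add p v (zp_mult p (zp_of_int p (int p ^ Suc (\<Phi> n))) z)) (h + n + 2)
      = (f v (h + n + 2) + int p ^ (h + n + 1) * ((z 1 * d) mod int p)) mod int p ^ (h + n + 2)"
    using unif_approx_truncation[OF unif_approx zp_of_int_in_\<Lambda>[OF a] \<open>l \<le> Suc n\<close> z]
    by (simp add: v_def d_def phiexp_def)
  also have "\<dots> = (f v (h + n + 2) + Q * ((z 1 * d) mod int p)) mod (Q * int p)"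
    by (simp add: Q_def mult.commute)
  also have "\<dots> = 0 \<longleftrightarrow> int p dvd f v (h + n + 2) div Q + z 1 * d"
  proof -
    have "int p dvd f v (h + n + 2) div Q + (z 1 * d) mod int p
        \<longleftrightarrow> int p dvd f v (h + n + 2) div Q + z 1 * d"
      by (simp add: dvd_eq_mod_eq_0 mod_add_right_eq)
    then show ?thesis
      using dvd_top_digit_iff[OF _ Q_dvd] p_pos by (simp add: Q_def)
  qed
  also have "\<dots> \<longleftrightarrow> z 1 = lift_digit n a"
    using the1_equality[OF ex1_lift_digit[OF assms(1,2)]] ex1_lift_digit[OF assms(1,2)]
      Zp_truncation_bounds[OF z, of 1]
    by (auto simp: lift_digit_def v_def Q_def d_def)
  finally show ?thesis unfolding v_def .
qed

primrec approx_root :: "nat \<Rightarrow> int" where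
  "approx_root 0 = int u"
| "approx_root (Suc k) = approx_root k + int p ^ Suc (\<Phi> (n0 + k)) * lift_digit (n0 + k) (approx_root k)"

lemma power_level_dvd: "i \<le> j \<Longrightarrow> int p ^ Suc (\<Phi> i) dvd int p ^ Suc (\<Phi> j)"
  using \<Phi>_strict_mono by (simp add: le_imp_power_dvd strict_mono_less_eq)

lemma approx_root_mod: "approx_root k mod int p ^ Suc (\<Phi> n0) = int u"
proof (induction k)
  case 0
  show ?case using int_u_mod by simp
next
  case (Suc k)
  define M where "M = int p ^ Suc (\<Phi> n0)"
  obtain q where q: "int p ^ Suc (\<Phi> (n0 + k)) = M * q"
    using power_level_dvd[of n0 "n0 + k"] by (auto simp: M_def elim: dvdE)
  have "approx_root (Suc k) mod M = approx_root k mod M"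
    by (simp only: approx_root.simps q mult.assoc mod_mult_self2)
  then show ?case using Suc.IH by (simp only: M_def)
qed

lemma approx_root_bounds: "0 \<le> approx_root k \<and> approx_root k < int p ^ Suc (\<Phi> (n0 + k))"
proof (induction k)
  case 0
  show ?case using int_u_bound by simp
next
  case (Suc k)
  define E where "E = int p ^ Suc (\<Phi> (n0 + k))"
  define t where "t = lift_digit (n0 + k) (approx_root k)"
  have t: "0 \<le> t" "t \<le> int p - 1"
    using lift_digit_bounds[OF _ approx_root_mod] by (auto simp: t_def)
  have "E * t \<le> E * (int p - 1)"
    using t(2) p_pos by (intro mult_left_mono) (auto simp: E_def)
  then have "approx_root (Suc k) < E * int p"
    using Suc.IH by (simp add: E_def t_def algebra_simps)
  also have "\<dots> \<le> int p ^ Suc (\<Phi> (n0 + Suc k))"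
    unfolding E_def power_Suc2[symmetric] using p_pos \<Phi>_strict_mono
    by (intro power_increasing) (auto simp: Suc_le_eq strict_mono_less)
  finally show ?case using Suc.IH t p_pos by (simp add: E_def t_def)
qed

lemma approx_root_coherent:
  "approx_root (Suc k) mod int p ^ Suc (\<Phi> (n0 + k)) = approx_root k"
  using approx_root_bounds[of k] by simp

lemma approx_root_vanishes: "f (zp_of_int p (approx_root k)) (h + n0 + k + 1) = 0"
proof (induction k)
  case 0
  show ?case using f_u by (simp add: zp_cong_def zp_of_int_def)
next
  case (Suc k)
  define t where "t = lift_digit (n0 + k) (approx_root k)"
  have "zp_of_int p t 1 = t"
    using lift_digit_bounds[OF _ approx_root_mod] by (simp add: t_def zp_of_int_def)
  then have "f (zp_add p (zp_of_int p (approx_root k))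
      (zp_mult p (zp_of_int p (int p ^ Suc (\<Phi> (n0 + k)))) (zp_of_int p t))) (h + (n0 + k) + 2) = 0"
    using Suc.IH by (subst lift_vanishes_iff[OF _ approx_root_mod])
      (simp_all add: t_def add.assoc zp_of_int_in_Zp p_pos)
  then show ?case by (simp add: zp_add_mult_of_int t_def add.assoc)
qed

lemma level_ge: "k \<le> Suc (\<Phi> (n0 + k))"
  using strict_mono_imp_increasing[OF \<Phi>_strict_mono, of "n0 + k"] by simp

lemma approx_root_limit:
  obtains \<xi> where "\<xi> \<in> Zp p" "\<And>k. \<xi> (Suc (\<Phi> (n0 + k))) = approx_root k"
proof (rule Zp_limit[where E = "\<lambda>k. Suc (\<Phi> (n0 + k))" and V = approx_root])
  show "mono (\<lambda>k. Suc (\<Phi> (n0 + k)))"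
    using \<Phi>_strict_mono by (auto intro: monoI simp: strict_mono_less_eq)
qed (use that p_pos level_ge approx_root_bounds approx_root_coherent in auto)

lemma rho_of_approx_root_limit:
  assumes "x \<in> Zp p" and x: "\<And>k. x (Suc (\<Phi> (n0 + k))) = approx_root k"
  shows "int (rho p \<Phi> x (Suc (n0 + k))) = lift_digit (n0 + k) (approx_root k)"
proof -
  have "\<Phi> (n0 + k) \<le> \<Phi> (Suc (n0 + k))"
    using \<Phi>_strict_mono by (simp add: strict_mono_less_eq)
  from rho_expansion[OF assms(1) p_pos this] x[of k] x[of "Suc k"]
  show ?thesis using p_pos by simp
qed

lemma approx_root_limit_vanishes:
  assumes x: "x \<in> Zp p" and x_levels: "\<And>k. x (Suc (\<Phi> (n0 + k))) = approx_root k"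
  shows "f x = zp_of_int p 0"
proof
  fix m
  define n where "n = n0 + m + 2"
  define a where "a = zp_of_int p (approx_root (Suc m))"
  have a: "a \<in> Zp p" by (simp add: a_def zp_of_int_in_Zp p_pos)
  have "zp_cong p (phiexp \<Phi> n) x a"
    using x_levels[of "Suc m"] approx_root_bounds[of "Suc m"]
    by (simp add: zp_cong_def phiexp_def n_def a_def zp_of_int_def)
  then have "f x n = f a n"
    using f_cong[OF _ x a] by (simp add: zp_cong_def n_def)
  also have "\<dots> = f a (h + n0 + Suc m + 1) mod int p ^ n"
    using Zp_truncation_mod[OF f_in_Zp[OF a], of n "h + n0 + Suc m + 1"] by (simp add: n_def)
  also have "\<dots> = 0" using approx_root_vanishes[of "Suc m"] by (simp add: a_def)
  finally have "f x n = 0" .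
  then show "f x m = zp_of_int p 0 m"
    using Zp_truncation_mod[OF f_in_Zp[OF x], of m n] by (simp add: n_def zp_of_int_def)
qed

lemma root_eq_approx_root_at_levels:
  assumes y: "y \<in> Zp p" and fy: "f y = zp_of_int p 0"
    and yu: "zp_cong p (Suc (\<Phi> n0)) y (zp_of_int p (int u))"
    and y_rho: "\<forall>n\<ge>n0. rho p \<Phi> y (n + 1) \<in> {0..p - 1}"
  shows "y (Suc (\<Phi> (n0 + k))) = approx_root k"
proof (induction k)
  case 0
  show ?case using yu int_u_mod by (simp add: zp_cong_def zp_of_int_def)
next
  case (Suc k)
  define n where "n = n0 + k"
  define A where "A = Suc (\<Phi> n)"
  define r where "r = rho p \<Phi> y (Suc n)"
  have mono_n: "\<Phi> n < \<Phi> (Suc n)" using \<Phi>_strict_mono by (simp add: strict_mono_less)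
  obtain z where z: "z \<in> Zp p"
    and y_split: "zp_add p (zp_of_int p (y A)) (zp_mult p (zp_of_int p (int p ^ A)) z) = y"
    and z1: "z 1 = int (digit p y A)"
    using Zp_split_at[OF y p_pos] by blast
  have "r \<le> p - 1" using y_rho by (simp add: r_def n_def)
  then have "r < p" using p_pos by simp
  then have "z 1 = int r"
    using z1 rho_less_imp_eq_digit[OF mono_n] by (simp add: r_def A_def)
  have "f (zp_of_int p (approx_root k)) (h + n + 1) = 0"
    using approx_root_vanishes[of k] by (simp add: n_def add.assoc)
  from lift_vanishes_iff[OF _ approx_root_mod this z]
  have "f y (h + n + 2) = 0 \<longleftrightarrow> z 1 = lift_digit n (approx_root k)"
    using y_split Suc.IH by (simp add: A_def n_def)
  then have "int r = lift_digit n (approx_root k)"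
    using fy \<open>z 1 = int r\<close> by (simp add: zp_of_int_def)
  then show ?case
    using rho_expansion[OF y p_pos less_imp_le[OF mono_n]] Suc.IH
    by (simp add: r_def n_def)
qed

theorem ex1_root:
  "\<exists>!\<xi>. \<xi> \<in> Zp p \<and> f \<xi> = zp_of_int p 0
     \<and> zp_cong p (Suc (\<Phi> n0)) \<xi> (zp_of_int p (int u))
     \<and> (\<forall>n\<ge>n0. rho p \<Phi> \<xi> (n + 1) \<in> {0..p - 1})"
proof -
  obtain \<xi> where \<xi>: "\<xi> \<in> Zp p" and \<xi>_levels: "\<And>k. \<xi> (Suc (\<Phi> (n0 + k))) = approx_root k"
    using approx_root_limit by blast
  have "rho p \<Phi> \<xi> (n + 1) \<in> {0..p - 1}" if "n \<ge> n0" for n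
  proof -
    obtain k where "n = n0 + k" using \<open>n \<ge> n0\<close> le_iff_add by blast
    then show ?thesis
      using rho_of_approx_root_limit[OF \<xi> \<xi>_levels, of k] lift_digit_bounds[OF _ approx_root_mod, of n k]
      by auto
  qed
  moreover have "zp_cong p (Suc (\<Phi> n0)) \<xi> (zp_of_int p (int u))"
    using \<xi>_levels[of 0] int_u_mod by (simp add: zp_cong_def zp_of_int_def)
  moreover have "y = \<xi>" if "y \<in> Zp p" "f y = zp_of_int p 0"
    "zp_cong p (Suc (\<Phi> n0)) y (zp_of_int p (int u))" "\<forall>n\<ge>n0. rho p \<Phi> y (n + 1) \<in> {0..p - 1}" for y
    using Zp_eqI_on_levels[OF that(1) \<xi> level_ge] root_eq_approx_root_at_levels[OF that] \<xi>_levels by simp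
  ultimately show ?thesis using \<xi> approx_root_limit_vanishes[OF \<xi> \<xi>_levels] by blast
qed

end

theorem corollary1:
  fixes p :: nat and \<Phi> :: "nat \<Rightarrow> nat" and f :: "(nat \<Rightarrow> int) \<Rightarrow> (nat \<Rightarrow> int)"
    and n0 u h l :: nat and \<delta> :: "nat \<Rightarrow> (nat \<Rightarrow> int) \<Rightarrow> (nat \<Rightarrow> int)"
    and \<Lambda> :: "(nat \<Rightarrow> int) set"
  assumes "prime p"
    and "strict_mono \<Phi>"
    and "f \<in> classF p \<Phi>"
    and "u < p ^ Suc (\<Phi> n0)"
    and "\<Lambda> = {v \<in> Zp p. zp_cong p (Suc (\<Phi> n0)) v (zp_of_int p (int u))}"
    and "unif_approx p \<Phi> f \<Lambda> h l \<delta>"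
    and "n0 + 1 \<ge> l"
    and "zp_cong p (h + n0 + 1) (f (zp_of_int p (int u))) (zp_of_int p 0)"
    and "\<forall>n\<ge>n0. \<forall>v\<in>\<Lambda>. \<delta> n v 1 \<noteq> 0"
  shows "\<exists>!\<xi>. \<xi> \<in> Zp p \<and> f \<xi> = zp_of_int p 0
            \<and> zp_cong p (Suc (\<Phi> n0)) \<xi> (zp_of_int p (int u))
            \<and> (\<forall>n\<ge>n0. rho p \<Phi> \<xi> (n + 1) \<in> {0..p - 1})"
  using hensel_lifting.ex1_root[OF hensel_lifting.intro[OF assms]] .

end
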